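(* Let $d\in\{1,2,3,4,7\}$ and let $Q_d$, $R_d$, $\beta_d$ be as in the context. For a positive integer $h$ define $$\mathscr{T}_{d,h}=c_d\prod_{p\in R_d}W_{d,p}(h)\prod_{\substack{p\in Q_d\\ p\mid h}}\frac{1-p^{-(m_p(h)+1)}}{1-p^{-1}},$$ with $c_1=2$, $c_2=2\sqrt2$, $c_3=\frac{2}{\sqrt3}$, $c_4=2$, $c_7=\frac{2\sqrt7}{3}$, and $W_{1,2}(h)=\frac14$ if $m_2(h)=0$, $=\frac{2^{m_2(h)+1}-3}{2^{m_2(h)+2}}$ if $m_2(h)\ge1$; $W_{2,2}(h)=\frac14$ if $m_2(h)\in\{0,1\}$, $=\frac{2^{m_2(h)}-3}{2^{m_2(h)+1}}$ if $m_2(h)\ge2$; $W_{3,3}(h)=\frac12\cdot\frac{3^{m_3(h)+1}-2}{3^{m_3(h)+1}}$; $W_{4,2}(h)=\frac18,\,0,\,\frac{5}{16}$ for $m_2(h)=0,1,2$ respectively, and $=\frac{3\cdot2^{m_2(h)-1}-3}{2^{m_2(h)+2}}$ if $m_2(h)\ge3$; $W_{7,2}(h)=\frac12$ if $m_2(h)\in\{0,1\}$, $=\frac34$ if $m_2(h)\ge2$; $W_{7,7}(h)=\frac12\cdot\frac{7^{m_7(h)+1}-4}{7^{m_7(h)+1}}$. Then for every $\varepsilon>0$, as $H\to\infty$, $$\sum_{\substack{1\le d_1,d_2\le H\\ d_1\ne d_2}}\mathscr{T}_{d,|d_2-d_1|}=2\sum_{1\le h\le H-1}(H-h)\,\ma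thscr{T}_{d,h}=\beta_d^2H^2+O_\varepsilon(H^{1+\varepsilon}).$$
   Context: $m_p(h)$ is the exponent of the prime $p$ in $h$. Sets of primes: $Q_1=Q_4=\{p\equiv3\ (4)\}$, $Q_2=\{p\equiv5,7\ (8)\}$, $Q_3=\{p\equiv2\ (3)\}$ (including $2$), $Q_7=\{p\equiv3,5,6\ (7)\}$; $R_1=R_2=R_4=\{2\}$, $R_3=\{3\}$, $R_7=\{2,7\}$. The constant $\beta_d$ is $\beta_d=\delta_d\, g_d\left(\frac{2|d|\,L_d(1)}{\pi\,\varphi(2|d|)}\right)^{1/2}$ with $g_d=\prod_{p\in Q_d,\ p\ \mathrm{odd}}(1-p^{-2})^{-1/2}$, $\delta_1=\delta_2=1$, $\delta_3=\tfrac23$, $\delta_4=\delta_7=\tfrac34$, $\varphi$ Euler's totient, and $L_d(1)=\frac{\pi}{4},\frac{\pi}{2\sqrt2},\frac{\pi}{2\sqrt3},\frac{\pi}{4},\frac{\pi}{2\sqrt7}$ for $d=1,2,3,4,7$. Thus $\beta_d^2=\kappa_d\prod_{p\in Q_d,\,p\text{ odd}}(1-p^{-2})^{-1}$ with $\kappa_1=\frac12,\ \kappa_2=\frac{1}{\sqrt2},\ \kappa_3=\frac49\cdot\frac{\sqrt3}{2},\ \kappa_4=\frac{9}{16}\cdot\frac12,\ \kappa_7=\frac{9}{16}\cdot\frac{\sqrt7}{6}$. $\mathscr{T}_{d,h}$ is the conjectural pair-correlation singular series for integers of the form $x^2+dy^2$. *)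

theory Defs
  imports "HOL-Analysis.Analysis" "HOL-Library.Landau_Symbols"
    "HOL-Computational_Algebra.Primes" "HOL-Number_Theory.Totient"
begin

definition m_exp :: "nat \<Rightarrow> nat \<Rightarrow> nat" where
  "m_exp p h = multiplicity p h"

definition Q_set :: "nat \<Rightarrow> nat set" where
  "Q_set d = {p. prime p \<and>
     (if d = 1 \<or> d = 4 then p mod 4 = 3
      else if d = 2 then p mod 8 \<in> {5, 7}
      else if d = 3 then p mod 3 = 2
      else if d = 7 then p mod 7 \<in> {3, 5, 6}
      else False)}"

definition R_set :: "nat \<Rightarrow> nat set" where
  "R_set d = (if d = 1 \<or> d = 2 \<or> d = 4 then {2}
              else if d = 3 then {3}
              else if d = 7 then {2, 7}
              else {})"

definition c_const :: "nat \<Rightarrow> real" where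
  "c_const d = (if d = 1 then 2 else if d = 2 then 2 * sqrt 2
                else if d = 3 then 2 / sqrt 3 else if d = 4 then 2
                else if d = 7 then 2 * sqrt 7 / 3 else 0)"

definition W :: "nat \<Rightarrow> nat \<Rightarrow> nat \<Rightarrow> real" where
  "W d p h = (let m = m_exp p h in
     if d = 1 \<and> p = 2 then
       (if m = 0 then 1/4 else (2^(m+1) - 3) / 2^(m+2))
     else if d = 2 \<and> p = 2 then
       (if m \<le> 1 then 1/4 else (2^m - 3) / 2^(m+1))
     else if d = 3 \<and> p = 3 then
       1/2 * ((3^(m+1) - 2) / 3^(m+1))
     else if d = 4 \<and> p = 2 then
       (if m = 0 then 1/8 else if m = 1 then 0 else if m = 2 then 5/16
        else (3 * 2^(m-1) - 3) / 2^(m+2))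
     else if d = 7 \<and> p = 2 then
       (if m \<le> 1 then 1/2 else 3/4)
     else if d = 7 \<and> p = 7 then
       1/2 * ((7^(m+1) - 4) / 7^(m+1))
     else 0)"

definition T_series :: "nat \<Rightarrow> nat \<Rightarrow> real" where
  "T_series d h = c_const d * (\<Prod>p\<in>R_set d. W d p h) *
     (\<Prod>p\<in>{p \<in> Q_set d. p dvd h}.
        (1 - (real p) powi (- (int (m_exp p h) + 1))) / (1 - 1 / real p))"

definition L1 :: "nat \<Rightarrow> real" where
  "L1 d = (if d = 1 then pi / 4 else if d = 2 then pi / (2 * sqrt 2)
           else if d = 3 then pi / (2 * sqrt 3) else if d = 4 then pi / 4
           else if d = 7 then pi / (2 * sqrt 7) else 0)"

definition delta_const :: "nat \<Rightarrow> real" where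
  "delta_const d = (if d = 1 \<or> d = 2 then 1 else if d = 3 then 2/3
                    else if d = 4 \<or> d = 7 then 3/4 else 0)"

definition g_const :: "nat \<Rightarrow> real" where
  "g_const d = (\<Prod>p. if p \<in> Q_set d \<and> odd p then (1 - 1 / (real p)^2) powr (-1/2) else 1)"

definition beta_const :: "nat \<Rightarrow> real" where
  "beta_const d = delta_const d * g_const d *
     sqrt (2 * real d * L1 d / (pi * real (totient (2 * d))))"

end

theory Submission
  imports Defs "HOL-Real_Asymp.Real_Asymp"
begin

(* 1. Reindexing the ordered pairs (d1,d2) by h = |d2 - d1| gives the first identity
      S(H) = 2 * sum_{h<H} (H - h) T_{d,h}.
   2. T_{d,h} is written as C_d * sum_{k | h} g_d(k) with an explicit multiplicative g_d:
      at p in R_d the local factor W_{d,p} is a partial sum of increments, at p in Q_d the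
      factor (1 - p^-(m+1))/(1 - 1/p) is a partial geometric series.  A case check shows
      |g_d(k)| <= 100/k.
   3. A general averaging lemma: if |g(k)| <= B/k, then sum_{h<=N} sum_{k|h} g(k)
      = A N + O(B log N) with A = sum_k g(k)/k, and hence
      2 * sum_{h<H} (H - h) sum_{k|h} g(k) = A H^2 + O(H log H).
   4. The constant A has the Euler product prod_p sum_j g_d(p^j)/p^j; evaluating the local
      factors and comparing with the infinite product g_d identifies C_d * A = beta_d^2.
   The theorem follows from 1, 2, 3 and 4. *)

lemma weighted_sum_Suc:
  fixes f :: "nat \<Rightarrow> real"
  shows "(\<Sum>h = 1..Suc H - 1. real (Suc H - h) * f h)
       = (\<Sum>h = 1..H - 1. real (H - h) * f h) + (\<Sum>h = 1..H. f h)"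
proof -
  have "(\<Sum>h = 1..H - 1. real (H - h) * f h) = (\<Sum>h = 1..H. real (H - h) * f h)"
    by (cases H) (simp_all add: sum.cl_ivl_Suc)
  moreover have "(\<Sum>h = 1..H. real (H - h) * f h) + (\<Sum>h = 1..H. f h)
      = (\<Sum>h = 1..H. real (Suc H - h) * f h)"
    by (subst sum.distrib[symmetric], rule sum.cong) (auto simp: of_nat_diff algebra_simps)
  ultimately show ?thesis by simp
qed

lemma sum_over_distinct_pairs:
  fixes \<phi> :: "nat \<Rightarrow> real"
  shows "(\<Sum>q\<in>{q \<in> {1..H} \<times> {1..H}. fst q \<noteq> snd q}. \<phi> (nat \<bar>int (snd q) - int (fst q)\<bar>))
     = 2 * (\<Sum>h = 1..H - 1. real (H - h) * \<phi> h)"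
proof (induction H)
  case 0
  then show ?case by simp
next
  case (Suc H)
  define S where "S (H::nat) = {q \<in> {1..H} \<times> {1..H}. fst q \<noteq> snd q}" for H
  define A where "A = (\<lambda>a. (a, Suc H)) ` {1..H}"
  define B where "B = (\<lambda>b. (Suc H, b)) ` {1..H}"
  let ?f = "\<lambda>q. \<phi> (nat \<bar>int (snd q) - int (fst q)\<bar>)"
  have S_Suc: "S (Suc H) = S H \<union> A \<union> B"
    unfolding S_def A_def B_def by (auto simp: le_Suc_eq)
  have fin: "finite (S H)" "finite A" "finite B" unfolding S_def A_def B_def
    by (auto intro: finite_subset[of _ "{1..H} \<times> {1..H}"])
  have disj: "S H \<inter> A = {}" "(S H \<union> A) \<inter> B = {}" unfolding S_def A_def B_def by auto
  have reversed: "(\<Sum>a = 1..H. \<phi> (Suc H - a)) = (\<Sum>h = 1..H. \<phi> h)"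
    using sum.atLeastAtMost_rev[of \<phi> 1 H] by simp
  have sum_A: "sum ?f A = (\<Sum>h = 1..H. \<phi> h)"
    unfolding A_def reversed[symmetric]
    by (subst sum.reindex) (auto simp: inj_on_def intro!: sum.cong arg_cong[where f=\<phi>])
  have sum_B: "sum ?f B = (\<Sum>h = 1..H. \<phi> h)"
    unfolding B_def reversed[symmetric]
    by (subst sum.reindex) (auto simp: inj_on_def intro!: sum.cong arg_cong[where f=\<phi>])
  have "sum ?f (S (Suc H)) = sum ?f (S H) + 2 * (\<Sum>h = 1..H. \<phi> h)"
    unfolding S_Suc using fin disj sum_A sum_B by (simp add: sum.union_disjoint)
  then show ?case
    using Suc.IH weighted_sum_Suc[of H \<phi>] unfolding S_def by (simp add: algebra_simps)
qed

text \<open>The same triangular weight, written as a sum of partial sums; this is how the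
  divisor-sum asymptotic for each N is turned into one for the weighted sum.\<close>
lemma weighted_sum_as_partial_sums:
  fixes f :: "nat \<Rightarrow> real"
  shows "(\<Sum>h = 1..H - 1. real (H - h) * f h) = (\<Sum>N = 1..H - 1. \<Sum>h = 1..N. f h)"
proof (induction H)
  case 0 then show ?case by simp
next
  case (Suc H)
  have "(\<Sum>N = 1..H. \<Sum>h = 1..N. f h) = (\<Sum>N = 1..H - 1. \<Sum>h = 1..N. f h) + (\<Sum>h = 1..H. f h)"
    by (cases H) (simp_all add: sum.cl_ivl_Suc)
  then show ?case using Suc.IH weighted_sum_Suc[of H f] by simp
qed

definition prime_power_prod :: "nat set \<Rightarrow> (nat \<Rightarrow> nat) \<Rightarrow> nat" where
  "prime_power_prod P e = (\<Prod>p\<in>P. p ^ e p)"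

definition multiplicative_fn :: "(nat \<Rightarrow> nat \<Rightarrow> 'a::comm_monoid_mult) \<Rightarrow> nat \<Rightarrow> 'a" where
  "multiplicative_fn \<gamma> k = (\<Prod>p\<in>prime_factors k. \<gamma> p (multiplicity p k))"

lemma multiplicity_prime_power_prod:
  assumes "finite P" "\<And>p. p \<in> P \<Longrightarrow> prime p" "prime q"
  shows "multiplicity q (prime_power_prod P e) = (if q \<in> P then e q else 0)"
  unfolding prime_power_prod_def using multiplicity_prod_prime_powers[OF assms] .

lemma prime_factors_prime_power_prod:
  assumes "finite P" "\<And>p. p \<in> P \<Longrightarrow> prime p"
  shows "prime_factors (prime_power_prod P e) \<subseteq> P"
proof
  fix q assume q: "q \<in> prime_factors (prime_power_prod P e)"
  then have "prime q" "multiplicity q (prime_power_prod P e) > 0"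
    by (auto simp: prime_factors_multiplicity)
  then show "q \<in> P"
    using multiplicity_prime_power_prod[OF assms \<open>prime q\<close>] by (auto split: if_splits)
qed

lemma prime_power_prod_bij:
  assumes "finite P" "\<And>p. p \<in> P \<Longrightarrow> prime p"
  shows "bij_betw (prime_power_prod P) (PiE P E)
     {k. k > 0 \<and> prime_factors k \<subseteq> P \<and> (\<forall>p\<in>P. multiplicity p k \<in> E p)}"
proof (rule bij_betwI')
  fix e1 e2 assume e: "e1 \<in> PiE P E" "e2 \<in> PiE P E"
  show "(prime_power_prod P e1 = prime_power_prod P e2) = (e1 = e2)"
  proof
    assume eq: "prime_power_prod P e1 = prime_power_prod P e2"
    show "e1 = e2"
    proof (rule PiE_ext[OF e])
      fix q assume "q \<in> P"
      then show "e1 q = e2 q"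
        using arg_cong[OF eq, of "multiplicity q"] multiplicity_prime_power_prod[OF assms, of q]
          assms(2) by simp
    qed
  qed simp
next
  fix e assume "e \<in> PiE P E"
  moreover have "prime_power_prod P e > 0"
    unfolding prime_power_prod_def using assms by (auto intro!: prod_pos simp: prime_gt_0_nat)
  ultimately show "prime_power_prod P e
      \<in> {k. k > 0 \<and> prime_factors k \<subseteq> P \<and> (\<forall>p\<in>P. multiplicity p k \<in> E p)}"
    using prime_factors_prime_power_prod[OF assms] multiplicity_prime_power_prod[OF assms]
      assms(2) by auto
next
  fix k assume k: "k \<in> {k. k > 0 \<and> prime_factors k \<subseteq> P \<and> (\<forall>p\<in>P. multiplicity p k \<in> E p)}"
  define e where "e = restrict (\<lambda>p. multiplicity p k) P"
  have "prime_power_prod P e = (\<Prod>p\<in>P. p ^ multiplicity p k)"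
    unfolding prime_power_prod_def e_def by simp
  also have "\<dots> = (\<Prod>p\<in>prime_factors k. p ^ multiplicity p k)"
    by (rule prod.mono_neutral_right[OF assms(1)])
      (use k assms(2) in \<open>auto simp: prime_factors_multiplicity\<close>)
  also have "\<dots> = k" using k by (simp add: prod_prime_factors)
  finally have "prime_power_prod P e = k" .
  moreover have "e \<in> PiE P E" using k by (auto simp: e_def)
  ultimately show "\<exists>e\<in>PiE P E. k = prime_power_prod P e" by metis
qed

lemma multiplicative_fn_prime_power_prod:
  assumes "finite P" "\<And>p. p \<in> P \<Longrightarrow> prime p" "\<And>p. \<gamma> p 0 = 1"
  shows "multiplicative_fn \<gamma> (prime_power_prod P e) = (\<Prod>p\<in>P. \<gamma> p (e p))"
proof -
  note mult = multiplicity_prime_power_prod[OF assms(1,2)]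
  note pf = prime_factors_prime_power_prod[OF assms(1,2)]
  have "multiplicative_fn \<gamma> (prime_power_prod P e)
      = (\<Prod>p\<in>prime_factors (prime_power_prod P e). \<gamma> p (e p))"
    unfolding multiplicative_fn_def
  proof (intro prod.cong refl)
    fix x assume "x \<in> prime_factors (prime_power_prod P e)"
    then have "prime x" "x \<in> P" using pf[of e] by (auto dest: in_prime_factors_imp_prime)
    then show "\<gamma> x (multiplicity x (prime_power_prod P e)) = \<gamma> x (e x)" using mult by simp
  qed
  also have "\<dots> = (\<Prod>p\<in>P. \<gamma> p (e p))"
  proof (rule prod.mono_neutral_left[OF assms(1) pf[of e]])
    show "\<forall>p\<in>P - prime_factors (prime_power_prod P e). \<gamma> p (e p) = 1"
    proof
      fix p assume p: "p \<in> P - prime_factors (prime_power_prod P e)"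
      then have "multiplicity p (prime_power_prod P e) = 0"
        using assms(2) by (auto simp: prime_factors_multiplicity)
      then show "\<gamma> p (e p) = 1" using mult[of p e] assms(2,3) p by auto
    qed
  qed
  finally show ?thesis .
qed

lemma divisors_by_multiplicity:
  assumes "h > (0::nat)"
  shows "{k. k dvd h} = {k. k > 0 \<and> prime_factors k \<subseteq> prime_factors h \<and>
            (\<forall>p\<in>prime_factors h. multiplicity p k \<in> {..multiplicity p h})}"
proof (intro set_eqI iffI)
  fix k assume "k \<in> {k. k dvd h}"
  then have k: "k dvd h" by simp
  then show "k \<in> {k. k > 0 \<and> prime_factors k \<subseteq> prime_factors h \<and>
            (\<forall>p\<in>prime_factors h. multiplicity p k \<in> {..multiplicity p h})}"
    using assms dvd_prime_factors[of h k] dvd_imp_multiplicity_le[of k h]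
    by (auto intro: Nat.gr0I)
next
  fix k assume "k \<in> {k. k > 0 \<and> prime_factors k \<subseteq> prime_factors h \<and>
            (\<forall>p\<in>prime_factors h. multiplicity p k \<in> {..multiplicity p h})}"
  then have k: "k > 0" "prime_factors k \<subseteq> prime_factors h"
    "\<forall>p\<in>prime_factors h. multiplicity p k \<le> multiplicity p h" by auto
  have "multiplicity p k \<le> multiplicity p h" if "prime p" for p :: nat
  proof (cases "p \<in> prime_factors h")
    case False
    then have "multiplicity p k = 0" using k that by (auto simp: prime_factors_multiplicity)
    then show ?thesis by simp
  qed (use k in auto)
  then have "k dvd h" using k by (intro multiplicity_le_imp_dvd) auto
  then show "k \<in> {k. k dvd h}" by simp
qed

lemma divisor_sum_multiplicative:
  fixes \<gamma> :: "nat \<Rightarrow> nat \<Rightarrow> 'a::comm_semiring_1"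
  assumes "h > 0" "\<And>p. \<gamma> p 0 = 1"
  shows "(\<Sum>k | k dvd h. multiplicative_fn \<gamma> k)
       = (\<Prod>p\<in>prime_factors h. \<Sum>j\<le>multiplicity p h. \<gamma> p j)"
proof -
  let ?P = "prime_factors h" and ?E = "\<lambda>p. {..multiplicity p h}"
  have fP: "finite ?P" and pP: "\<And>p. p \<in> ?P \<Longrightarrow> prime p" by auto
  have "(\<Prod>p\<in>?P. \<Sum>j\<le>multiplicity p h. \<gamma> p j) = (\<Sum>e\<in>PiE ?P ?E. \<Prod>p\<in>?P. \<gamma> p (e p))"
    by (rule prod_sum_PiE) auto
  also have "\<dots> = (\<Sum>e\<in>PiE ?P ?E. multiplicative_fn \<gamma> (prime_power_prod ?P e))"
    using multiplicative_fn_prime_power_prod[of ?P \<gamma>, OF fP pP assms(2)] by simp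
  also have "\<dots> = (\<Sum>k | k dvd h. multiplicative_fn \<gamma> k)"
    unfolding divisors_by_multiplicity[OF assms(1)]
    by (rule sum.reindex_bij_betw[OF prime_power_prod_bij[OF fP pP]])
  finally show ?thesis by simp
qed

lemma summable_inverse_squares: "summable (\<lambda>k::nat. 1 / real k ^ 2)"
  using inverse_power_summable[of 2, where 'a=real] by (simp add: inverse_eq_divide)

text \<open>Tail estimate sum_{k > N} 1/k^2 <= 1/N, by comparison with a telescoping series.\<close>
lemma inverse_squares_tail:
  assumes "N \<ge> (1::nat)"
  shows "(\<Sum>i. 1 / real (i + Suc N) ^ 2) \<le> 1 / real N"
proof -
  have telescope: "(\<lambda>i. 1 / real (i + N) - 1 / real (Suc i + N)) sums (1 / real (0 + N) - 0)"
    by (rule telescope_sums'[of "\<lambda>i. 1 / real (i + N)"]) real_asymp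
  have le: "1 / real (i + Suc N) ^ 2 \<le> 1 / real (i + N) - 1 / real (Suc i + N)" for i
  proof -
    have pos: "real (i + N) > 0" using assms by simp
    have "1 / real (i + N) - 1 / real (Suc i + N) = 1 / (real (i + N) * real (i + Suc N))"
      using pos by (simp add: field_simps)
    also have "\<dots> \<ge> 1 / real (i + Suc N) ^ 2"
      using pos by (intro divide_left_mono) (auto simp: power2_eq_square intro!: mult_right_mono)
    finally show ?thesis .
  qed
  have "(\<Sum>i. 1 / real (i + Suc N) ^ 2) \<le> (\<Sum>i. 1 / real (i + N) - 1 / real (Suc i + N))"
    using le telescope summable_ignore_initial_segment[OF summable_inverse_squares, of "Suc N"]
    by (intro suminf_le) (auto simp: sums_iff)
  also have "\<dots> = 1 / real N" using telescope by (simp add: sums_iff)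
  finally show ?thesis .
qed

lemma card_multiples_up_to:
  assumes "k > (0::nat)"
  shows "card {h \<in> {1..N}. k dvd h} = N div k"
proof -
  have "{h \<in> {1..N}. k dvd h} = (\<lambda>i. k * i) ` {1..N div k}"
  proof (intro set_eqI iffI)
    fix h assume "h \<in> {h \<in> {1..N}. k dvd h}"
    then obtain i where "h = k * i" "1 \<le> h" "h \<le> N" by auto
    then show "h \<in> (\<lambda>i. k * i) ` {1..N div k}" using assms
      by (auto simp: less_eq_div_iff_mult_less_eq mult.commute intro: Nat.gr0I)
  next
    fix h assume "h \<in> (\<lambda>i. k * i) ` {1..N div k}"
    then show "h \<in> {h \<in> {1..N}. k dvd h}" using assms
      by (auto simp: less_eq_div_iff_mult_less_eq mult.commute)
  qed
  moreover have "inj_on (\<lambda>i. k * i) {1..N div k}" using assms by (auto simp: inj_on_def)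
  ultimately show ?thesis by (simp add: card_image)
qed

text \<open>Interchanging the summations: each k <= N divides exactly N div k of the h <= N.\<close>
lemma divisor_sum_swap:
  fixes g :: "nat \<Rightarrow> real"
  shows "(\<Sum>h = 1..N. \<Sum>k | k dvd h. g k) = (\<Sum>k = 1..N. g k * real (N div k))"
proof -
  have "(\<Sum>h = 1..N. \<Sum>k | k dvd h. g k) = (\<Sum>h = 1..N. \<Sum>k = 1..N. if k dvd h then g k else 0)"
  proof (rule sum.cong[OF refl])
    fix h assume h: "h \<in> {1..N}"
    have "{k. k dvd h} = {k \<in> {1..N}. k dvd h}"
      using h by (auto intro: Nat.gr0I dest: dvd_imp_le)
    moreover have "(\<Sum>k = 1..N. if k dvd h then g k else 0) = (\<Sum>k\<in>{k \<in> {1..N}. k dvd h}. g k)"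
      by (rule sum.inter_filter[symmetric]) simp
    ultimately show "(\<Sum>k | k dvd h. g k) = (\<Sum>k = 1..N. if k dvd h then g k else 0)"
      by simp
  qed
  also have "\<dots> = (\<Sum>k = 1..N. \<Sum>h = 1..N. if k dvd h then g k else 0)"
    by (rule sum.swap)
  also have "\<dots> = (\<Sum>k = 1..N. g k * real (N div k))"
  proof (intro sum.cong refl)
    fix k assume k: "k \<in> {1..N}"
    have "(\<Sum>h = 1..N. if k dvd h then g k else 0) = (\<Sum>h\<in>{h \<in> {1..N}. k dvd h}. g k)"
      by (rule sum.inter_filter[symmetric]) simp
    then show "(\<Sum>h = 1..N. if k dvd h then g k else 0) = g k * real (N div k)"
      using card_multiples_up_to[of k N] k by simp
  qed
  finally show ?thesis .
qed

lemma summable_over_k_if_bounded: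
  fixes g :: "nat \<Rightarrow> real"
  assumes bound: "\<And>k. k \<ge> 1 \<Longrightarrow> \<bar>g k\<bar> \<le> B / real k"
  shows "\<And>k. \<bar>g k / real k\<bar> \<le> B * (1 / real k ^ 2)"
    and "summable (\<lambda>k. \<bar>g k / real k\<bar>)"
    and "summable (\<lambda>k. g k / real k)"
proof -
  show le: "\<bar>g k / real k\<bar> \<le> B * (1 / real k ^ 2)" for k
  proof (cases "k = 0")
    case False
    then have "\<bar>g k / real k\<bar> = \<bar>g k\<bar> / real k" by (simp add: abs_divide)
    also have "\<dots> \<le> (B / real k) / real k"
      using bound[of k] False by (intro divide_right_mono) auto
    finally show ?thesis by (simp add: power2_eq_square)
  next
    case True
    then show ?thesis using bound[of 1] by simp
  qed
  show "summable (\<lambda>k. \<bar>g k / real k\<bar>)"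
    by (rule summable_comparison_test'[OF summable_mult[OF summable_inverse_squares, of B]])
      (use le in auto)
  then show "summable (\<lambda>k. g k / real k)" by (rule summable_rabs_cancel)
qed

text \<open>Partial sums of a divisor sum: sum_{h<=N} sum_{k|h} g(k) = A N + O(B log N), with
  A = sum_k g(k)/k.  Write N div k = N/k + O(1), and bound the tail of A by B/N.\<close>
lemma divisor_sum_partial_sums:
  fixes g :: "nat \<Rightarrow> real"
  assumes bound: "\<And>k. k \<ge> 1 \<Longrightarrow> \<bar>g k\<bar> \<le> B / real k" and N: "N \<ge> 1"
  shows "\<bar>(\<Sum>h = 1..N. \<Sum>k | k dvd h. g k) - (\<Sum>k. g k / real k) * real N\<bar>
       \<le> B * (2 + ln (real N))"
proof -
  note summ = summable_over_k_if_bounded[OF bound]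
  have B: "B \<ge> 0" using bound[of 1] by linarith
  let ?a = "\<lambda>k. g k / real k"
  define tail where "tail = (\<Sum>i. ?a (i + Suc N))"
  have A_split: "(\<Sum>k. ?a k) = tail + (\<Sum>k = 1..N. ?a k)"
  proof -
    have "(\<Sum>k. ?a k) = tail + (\<Sum>k<Suc N. ?a k)"
      unfolding tail_def by (rule suminf_split_initial_segment[OF summ(3)])
    also have "(\<Sum>k<Suc N. ?a k) = (\<Sum>k = 1..N. ?a k)"
      by (simp add: atLeast1_atMost_eq_remove0 lessThan_Suc_atMost sum.remove[of "{..N}" 0])
    finally show ?thesis .
  qed
  have tail_bound: "\<bar>tail\<bar> \<le> B / real N"
  proof -
    have s1: "summable (\<lambda>i. \<bar>?a (i + Suc N)\<bar>)"
      using summable_ignore_initial_segment[OF summ(2)] .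
    have s2: "summable (\<lambda>i. 1 / real (i + Suc N) ^ 2)"
      using summable_ignore_initial_segment[OF summable_inverse_squares] .
    have "\<bar>tail\<bar> \<le> (\<Sum>i. \<bar>?a (i + Suc N)\<bar>)" unfolding tail_def by (rule summable_rabs[OF s1])
    also have "\<dots> \<le> (\<Sum>i. B * (1 / real (i + Suc N) ^ 2))"
      by (rule suminf_le[OF _ s1 summable_mult[OF s2]]) (rule summ(1))
    also have "\<dots> = B * (\<Sum>i. 1 / real (i + Suc N) ^ 2)" by (rule suminf_mult[OF s2])
    also have "\<dots> \<le> B * (1 / real N)" using inverse_squares_tail[OF N] B by (intro mult_left_mono)
    finally show ?thesis by simp
  qed
  have rounding: "\<bar>\<Sum>k = 1..N. g k * (real (N div k) - real N / real k)\<bar> \<le> B * (1 + ln (real N))"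
  proof -
    have "\<bar>\<Sum>k = 1..N. g k * (real (N div k) - real N / real k)\<bar> \<le> (\<Sum>k = 1..N. B * (1 / real k))"
    proof (rule order.trans[OF sum_abs sum_mono])
      fix k assume k: "k \<in> {1..N}"
      have "real (N div k) = of_int \<lfloor>real N / real k\<rfloor>"
        by (metis floor_divide_of_nat_eq of_int_of_nat_eq)
      then have "\<bar>real (N div k) - real N / real k\<bar> \<le> 1" by linarith
      then have "\<bar>g k * (real (N div k) - real N / real k)\<bar> \<le> \<bar>g k\<bar> * 1"
        unfolding abs_mult by (intro mult_left_mono) auto
      also have "\<dots> \<le> B * (1 / real k)" using bound[of k] k by simp
      finally show "\<bar>g k * (real (N div k) - real N / real k)\<bar> \<le> B * (1 / real k)" .
    qed
    also have "\<dots> = B * harm N" by (simp add: harm_def sum_distrib_left inverse_eq_divide)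
    also have "\<dots> \<le> B * (1 + ln (real N))"
      using euler_mascheroni_sequence_decreasing[of 1 N] N B
      by (intro mult_left_mono) (auto simp: harm_def)
    finally show ?thesis .
  qed
  have "(\<Sum>h = 1..N. \<Sum>k | k dvd h. g k) - (\<Sum>k. ?a k) * real N
      = (\<Sum>k = 1..N. g k * (real (N div k) - real N / real k)) - tail * real N"
    unfolding divisor_sum_swap A_split
    by (simp add: algebra_simps sum_subtractf sum_distrib_left sum_distrib_right)
  moreover have "\<bar>tail * real N\<bar> \<le> B"
    using tail_bound N by (simp add: abs_mult field_simps)
  ultimately show ?thesis using rounding by (simp add: algebra_simps)
qed

text \<open>Summing the previous estimate over N < H: the triangularly weighted divisor sum is
  A H^2 + O(H log H).\<close>
lemma weighted_divisor_sum_estimate: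
  fixes g :: "nat \<Rightarrow> real"
  assumes bound: "\<And>k. k \<ge> 1 \<Longrightarrow> \<bar>g k\<bar> \<le> B / real k" and H: "H \<ge> 1"
  shows "\<bar>2 * (\<Sum>h = 1..H - 1. real (H - h) * (\<Sum>k | k dvd h. g k)) - (\<Sum>k. g k / real k) * real H ^ 2\<bar>
     \<le> (\<bar>\<Sum>k. g k / real k\<bar> + 2 * B) * (real H * (2 + ln (real H)))"
proof -
  define A where "A = (\<Sum>k. g k / real k)"
  define E where "E N = (\<Sum>h = 1..N. \<Sum>k | k dvd h. g k) - A * real N" for N
  have B: "B \<ge> 0" using bound[of 1] by linarith
  have E_bound: "\<bar>E N\<bar> \<le> B * (2 + ln (real H))" if "N \<in> {1..H - 1}" for N
  proof -
    have "\<bar>E N\<bar> \<le> B * (2 + ln (real N))"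
      unfolding E_def A_def using divisor_sum_partial_sums[OF bound, of N] that by simp
    also have "\<dots> \<le> B * (2 + ln (real H))" using that B by (intro mult_left_mono) auto
    finally show ?thesis .
  qed
  have gauss: "2 * (\<Sum>N = 1..H - 1. real N) = real H ^ 2 - real H"
    using double_gauss_sum_from_Suc_0[of "H - 1", where 'a=real] H
    by (simp add: of_nat_diff power2_eq_square algebra_simps)
  have "(\<Sum>h = 1..H - 1. real (H - h) * (\<Sum>k | k dvd h. g k))
      = (\<Sum>N = 1..H - 1. A * real N + E N)"
    unfolding weighted_sum_as_partial_sums E_def by simp
  also have "\<dots> = A * (\<Sum>N = 1..H - 1. real N) + (\<Sum>N = 1..H - 1. E N)"
    by (simp add: sum.distrib sum_distrib_left)
  finally have "2 * (\<Sum>h = 1..H - 1. real (H - h) * (\<Sum>k | k dvd h. g k))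
      = A * (2 * (\<Sum>N = 1..H - 1. real N)) + 2 * (\<Sum>N = 1..H - 1. E N)"
    by (simp add: algebra_simps)
  then have eq: "2 * (\<Sum>h = 1..H - 1. real (H - h) * (\<Sum>k | k dvd h. g k)) - A * real H ^ 2
      = 2 * (\<Sum>N = 1..H - 1. E N) - A * real H"
    unfolding gauss by (simp add: algebra_simps)
  have "\<bar>\<Sum>N = 1..H - 1. E N\<bar> \<le> (\<Sum>N = 1..H - 1. B * (2 + ln (real H)))"
    by (rule order.trans[OF sum_abs sum_mono]) (rule E_bound)
  also have "\<dots> \<le> real H * (B * (2 + ln (real H)))"
    using B H by (simp add: of_nat_diff) (intro mult_right_mono; simp)
  finally have sum_E: "\<bar>\<Sum>N = 1..H - 1. E N\<bar> \<le> B * (real H * (2 + ln (real H)))"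
    by (simp add: mult_ac)
  have A_term: "\<bar>A\<bar> * real H \<le> \<bar>A\<bar> * (real H * (2 + ln (real H)))"
    using H by (intro mult_left_mono) (auto simp: mult_le_cancel_left1)
  have "\<bar>2 * (\<Sum>N = 1..H - 1. E N) - A * real H\<bar> \<le> 2 * \<bar>\<Sum>N = 1..H - 1. E N\<bar> + \<bar>A\<bar> * real H"
    using abs_triangle_ineq4[of "2 * (\<Sum>N = 1..H - 1. E N)" "A * real H"] by (simp add: abs_mult)
  moreover have "(\<bar>A\<bar> + 2 * B) * (real H * (2 + ln (real H)))
      = \<bar>A\<bar> * (real H * (2 + ln (real H))) + 2 * (B * (real H * (2 + ln (real H))))"
    by (simp add: algebra_simps)
  ultimately show ?thesis unfolding A_def[symmetric] eq using sum_E A_term by linarith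
qed

lemma weighted_divisor_sum_bigo:
  fixes g :: "nat \<Rightarrow> real"
  assumes bound: "\<And>k. k \<ge> 1 \<Longrightarrow> \<bar>g k\<bar> \<le> B / real k" and "\<epsilon> > 0"
  shows "(\<lambda>H. 2 * (\<Sum>h = 1..H - 1. real (H - h) * (\<Sum>k | k dvd h. g k))
              - (\<Sum>k. g k / real k) * real H ^ 2) \<in> O(\<lambda>H. real H powr (1 + \<epsilon>))"
proof -
  have "(\<lambda>H. 2 * (\<Sum>h = 1..H - 1. real (H - h) * (\<Sum>k | k dvd h. g k))
              - (\<Sum>k. g k / real k) * real H ^ 2) \<in> O(\<lambda>H. real H * (2 + ln (real H)))"
  proof (rule bigoI)
    show "\<forall>\<^sub>F H in at_top. norm (2 * (\<Sum>h = 1..H - 1. real (H - h) * (\<Sum>k | k dvd h. g k))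
              - (\<Sum>k. g k / real k) * real H ^ 2)
        \<le> (\<bar>\<Sum>k. g k / real k\<bar> + 2 * B) * norm (real H * (2 + ln (real H)))"
      using eventually_ge_at_top[of "1::nat"]
      by eventually_elim (use weighted_divisor_sum_estimate[OF bound] in \<open>auto simp: abs_mult\<close>)
  qed
  also have "(\<lambda>H::nat. real H * (2 + ln (real H))) \<in> O(\<lambda>H. real H powr (1 + \<epsilon>))"
    using \<open>\<epsilon> > 0\<close> by real_asymp
  finally show ?thesis .
qed

lemma admissible_d_cases:
  assumes "d \<in> {1,2,3,4,7::nat}"
  obtains "d = 1" | "d = 2" | "d = 3" | "d = 4" | "d = 7"
  using assms by auto

definition W_local :: "nat \<Rightarrow> nat \<Rightarrow> nat \<Rightarrow> real" where
  "W_local d p m = (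
     if d = 1 \<and> p = 2 then
       (if m = 0 then 1/4 else (2^(m+1) - 3) / 2^(m+2))
     else if d = 2 \<and> p = 2 then
       (if m \<le> 1 then 1/4 else (2^m - 3) / 2^(m+1))
     else if d = 3 \<and> p = 3 then
       1/2 * ((3^(m+1) - 2) / 3^(m+1))
     else if d = 4 \<and> p = 2 then
       (if m = 0 then 1/8 else if m = 1 then 0 else if m = 2 then 5/16
        else (3 * 2^(m-1) - 3) / 2^(m+2))
     else if d = 7 \<and> p = 2 then
       (if m \<le> 1 then 1/2 else 3/4)
     else if d = 7 \<and> p = 7 then
       1/2 * ((7^(m+1) - 4) / 7^(m+1))
     else 0)"

lemma W_eq_W_local: "W d p h = W_local d p (m_exp p h)"
  unfolding W_def W_local_def Let_def by simp

text \<open>Normalised increments of W_{d,p}: their partial sums recover W_{d,p}(p^m)/W_{d,p}(1).\<close>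
definition W_increment :: "nat \<Rightarrow> nat \<Rightarrow> nat \<Rightarrow> real" where
  "W_increment d p j =
     (if j = 0 then 1 else (W_local d p j - W_local d p (j - 1)) / W_local d p 0)"

text \<open>The values g_d(p^j) of the multiplicative function with T_{d,h} = C_d sum_{k|h} g_d(k).\<close>
definition local_coeff :: "nat \<Rightarrow> nat \<Rightarrow> nat \<Rightarrow> real" where
  "local_coeff d p j =
     (if p \<in> R_set d then W_increment d p j else if p \<in> Q_set d then (1 / real p) ^ j
      else if j = 0 then 1 else 0)"

definition T_const :: "nat \<Rightarrow> real" where
  "T_const d = c_const d * (\<Prod>p\<in>R_set d. W_local d p 0)"

lemma local_coeff_0: "local_coeff d p 0 = 1"
  by (simp add: local_coeff_def W_increment_def)

lemma R_set_facts:
  assumes "d \<in> {1,2,3,4,7}"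
  shows "finite (R_set d)" "card (R_set d) \<le> 2" "\<And>p. p \<in> R_set d \<Longrightarrow> prime p"
    "\<And>p. p \<in> R_set d \<Longrightarrow> p \<notin> Q_set d" "\<And>p. p \<in> R_set d \<Longrightarrow> W_local d p 0 \<noteq> 0"
  using assms by (auto simp: R_set_def Q_set_def W_local_def)

lemma Q_set_prime: "p \<in> Q_set d \<Longrightarrow> prime p"
  by (simp add: Q_set_def)

lemma sum_W_increment:
  assumes "W_local d p 0 \<noteq> 0"
  shows "(\<Sum>j\<le>m. W_increment d p j) = W_local d p m / W_local d p 0"
  using assms by (induction m) (simp_all add: W_increment_def diff_divide_distrib)

text \<open>The Q_d-factor of T_{d,h} is a partial geometric series.\<close>
lemma geometric_partial_sum_powi:
  assumes "p \<ge> (2::nat)"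
  shows "(\<Sum>j\<le>m. (1 / real p) ^ j) = (1 - real p powi (- (int m + 1))) / (1 - 1 / real p)"
proof -
  have "real p powi (- (int m + 1)) = inverse (real p powi (int (Suc m)))"
    by (metis add.commute of_nat_Suc power_int_minus)
  also have "\<dots> = (1 / real p) ^ Suc m"
    by (simp only: power_int_of_nat) (simp add: power_one_over inverse_eq_divide)
  finally have "real p powi (- (int m + 1)) = (1 / real p) ^ Suc m" .
  moreover have "1 - 1 / real p \<noteq> 0" using assms by simp
  moreover have "(1 - 1 / real p) * (\<Sum>j\<le>m. (1 / real p) ^ j) = 1 - (1 / real p) ^ Suc m"
    by (rule sum_gp_basic)
  ultimately show ?thesis by (simp add: field_simps)
qed

lemma T_series_divisor_sum:
  assumes d: "d \<in> {1,2,3,4,7}" and h: "h > 0"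
  shows "T_series d h = T_const d * (\<Sum>k | k dvd h. multiplicative_fn (local_coeff d) k)"
proof -
  define G where "G p = (\<Sum>j\<le>multiplicity p h. local_coeff d p j)" for p
  note R = R_set_facts[OF d]
  have divsum: "(\<Sum>k | k dvd h. multiplicative_fn (local_coeff d) k) = (\<Prod>p\<in>prime_factors h. G p)"
    unfolding G_def by (rule divisor_sum_multiplicative[OF h]) (rule local_coeff_0)
  have G_R: "G p = W_local d p (multiplicity p h) / W_local d p 0" if "p \<in> R_set d" for p
    unfolding G_def local_coeff_def using that sum_W_increment[OF R(5)[OF that]] by simp
  have G_Q: "G p = (1 - real p powi (- (int (multiplicity p h) + 1))) / (1 - 1 / real p)"
    if "p \<in> Q_set d" for p
  proof -
    have "p \<notin> R_set d" "p \<ge> 2" using that R(4) prime_ge_2_nat[OF Q_set_prime[OF that]] by auto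
    then show ?thesis unfolding G_def local_coeff_def using that geometric_partial_sum_powi by simp
  qed
  have G_other: "G p = 1" if "p \<notin> R_set d" "p \<notin> Q_set d" for p
    unfolding G_def local_coeff_def using that by (simp add: sum.delta)
  have G_coprime: "G p = 1" if "p \<notin> prime_factors h" "prime p" for p
    using that by (simp add: G_def local_coeff_0 prime_factors_multiplicity)
  have R_part: "(\<Prod>p\<in>R_set d. W d p h) = (\<Prod>p\<in>R_set d. W_local d p 0) * (\<Prod>p\<in>R_set d. G p)"
  proof -
    have "(\<Prod>p\<in>R_set d. W d p h) = (\<Prod>p\<in>R_set d. W_local d p 0 * G p)"
      using G_R R(5) by (intro prod.cong) (auto simp: W_eq_W_local m_exp_def)
    then show ?thesis by (simp add: prod.distrib)
  qed
  have R_support: "(\<Prod>p\<in>R_set d. G p) = (\<Prod>p\<in>prime_factors h \<inter> R_set d. G p)"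
    by (rule prod.mono_neutral_right[OF R(1)]) (use G_coprime R(3) in auto)
  have "{p \<in> Q_set d. p dvd h} = prime_factors h \<inter> Q_set d"
    using h Q_set_prime by (auto simp: in_prime_factors_iff)
  then have Q_part: "(\<Prod>p\<in>{p \<in> Q_set d. p dvd h}.
        (1 - (real p) powi (- (int (m_exp p h) + 1))) / (1 - 1 / real p))
      = (\<Prod>p\<in>prime_factors h \<inter> Q_set d. G p)"
    unfolding m_exp_def using G_Q by (intro prod.cong) auto
  have split: "(\<Prod>p\<in>prime_factors h. G p)
     = (\<Prod>p\<in>prime_factors h \<inter> R_set d. G p) * (\<Prod>p\<in>prime_factors h - R_set d. G p)"
    by (metis Int_Diff_Un Int_Diff_disjoint finite_set_mset finite_Int finite_Diff prod.union_disjoint)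
  have rest: "(\<Prod>p\<in>prime_factors h - R_set d. G p) = (\<Prod>p\<in>prime_factors h \<inter> Q_set d. G p)"
    by (rule prod.mono_neutral_right) (use G_other R(4) in auto)
  show ?thesis
    unfolding T_series_def T_const_def divsum R_part R_support Q_part split rest
    by (simp add: mult_ac)
qed

text \<open>Numerators of the increments at p \<in> R_d: W_increment d p j = numer / p^j, where the
  numerator is eventually constant.\<close>
definition W_increment_numer :: "nat \<Rightarrow> nat \<Rightarrow> nat \<Rightarrow> real" where
  "W_increment_numer d p j = (if j = 0 then 1 else
     if d = 1 \<and> p = 2 then (if j = 1 then -1 else 3)
     else if d = 2 \<and> p = 2 then (if j = 1 then 0 else if j = 2 then -2 else 6)
     else if d = 3 \<and> p = 3 then 4
     else if d = 4 \<and> p = 2 then (if j = 1 then -2 else if j = 2 then 10 else if j = 3 then -2 else 6)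
     else if d = 7 \<and> p = 2 then (if j = 2 then 2 else 0)
     else if d = 7 \<and> p = 7 then 8 else 0)"

lemma nat_cases_up_to_4:
  fixes j :: nat
  obtains "j = 0" | "j = 1" | "j = 2" | "j = 3" | k where "j = k + 4"
proof -
  have "j = 0 \<or> j = 1 \<or> j = 2 \<or> j = 3 \<or> (\<exists>k. j = k + 4)" by presburger
  then show ?thesis using that by blast
qed

text \<open>Checked case by case; for j >= 4 all formulas for W_{d,p} are geometric in p^-m.\<close>
lemma W_increment_closed_form:
  assumes "d \<in> {1,2,3,4,7}" "p \<in> R_set d"
  shows "W_increment d p j = W_increment_numer d p j / real p ^ j"
proof -
  consider "d = 1" "p = 2" | "d = 2" "p = 2" | "d = 3" "p = 3" | "d = 4" "p = 2"
    | "d = 7" "p = 2" | "d = 7" "p = 7"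
    using assms by (auto simp: R_set_def)
  then show ?thesis
    by cases (cases j rule: nat_cases_up_to_4;
        simp add: W_increment_def W_local_def W_increment_numer_def field_simps power_add)+
qed

lemma local_coeff_bound:
  assumes d: "d \<in> {1,2,3,4,7}" and p: "prime p"
  shows "\<bar>local_coeff d p j\<bar> \<le> (if p \<in> R_set d then 10 else 1) / real p ^ j"
proof (cases "p \<in> R_set d")
  case True
  then have "\<bar>local_coeff d p j\<bar> = \<bar>W_increment_numer d p j\<bar> / real p ^ j"
    using W_increment_closed_form[OF d True] by (simp add: local_coeff_def abs_divide)
  also have "\<dots> \<le> 10 / real p ^ j"
    by (intro divide_right_mono) (auto simp: W_increment_numer_def)
  finally show ?thesis using True by simp
next
  case False
  then show ?thesis by (auto simp: local_coeff_def power_one_over)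
qed

text \<open>The basic size bound |g_d(k)| <= 100/k: at most two primes (those of R_d) contribute
  a factor 10 instead of 1.\<close>
lemma multiplicative_local_coeff_bound:
  assumes d: "d \<in> {1,2,3,4,7}" and k: "k \<ge> 1"
  shows "\<bar>multiplicative_fn (local_coeff d) k\<bar> \<le> 100 / real k"
proof -
  let ?b = "\<lambda>p. (if p \<in> R_set d then 10 else 1 :: real)"
  have b_prod: "(\<Prod>p\<in>prime_factors k. ?b p) \<le> 100"
  proof -
    have "(\<Prod>p\<in>prime_factors k. ?b p) = 10 ^ card {p \<in> prime_factors k. p \<in> R_set d}"
      by (simp add: prod.inter_filter[symmetric])
    also have "\<dots> \<le> 10 ^ card (R_set d)"
      using R_set_facts(1)[OF d] by (intro power_increasing card_mono) auto
    also have "\<dots> \<le> 10 ^ 2" using R_set_facts(2)[OF d] by (intro power_increasing) auto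
    finally show ?thesis by simp
  qed
  have "\<bar>multiplicative_fn (local_coeff d) k\<bar>
      = (\<Prod>p\<in>prime_factors k. \<bar>local_coeff d p (multiplicity p k)\<bar>)"
    unfolding multiplicative_fn_def by (rule abs_prod)
  also have "\<dots> \<le> (\<Prod>p\<in>prime_factors k. ?b p / real p ^ multiplicity p k)"
    by (intro prod_mono conjI local_coeff_bound[OF d]) auto
  also have "\<dots> = (\<Prod>p\<in>prime_factors k. ?b p) / real (\<Prod>p\<in>prime_factors k. p ^ multiplicity p k)"
    by (simp add: prod_dividef)
  also have "\<dots> = (\<Prod>p\<in>prime_factors k. ?b p) / real k"
    using k by (subst prod_prime_factors) auto
  also have "\<dots> \<le> 100 / real k" using b_prod by (intro divide_right_mono) auto
  finally show ?thesis .
qed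

text \<open>Euler factors sum_j g_d(p^j)/p^j of the constant A = sum_k g_d(k)/k.  For p \<in> R_d
  they are explicit rationals, for p \<in> Q_d they are (1 - p^-2)^-1, otherwise 1.\<close>
definition euler_factor_R :: "nat \<Rightarrow> nat \<Rightarrow> real" where
  "euler_factor_R d p = (if d = 3 then 3/2 else if d = 4 then 9/8 else if d = 7 \<and> p = 2 then 9/8
              else if d = 7 then 7/6 else 1)"

definition euler_factor :: "nat \<Rightarrow> nat \<Rightarrow> real" where
  "euler_factor d p = (if p \<in> R_set d then euler_factor_R d p
     else if p \<in> Q_set d then 1 / (1 - 1 / real p ^ 2) else 1)"

text \<open>At p \<in> R_d the local series is a geometric series in p^-2 up to finitely many terms.\<close>
lemma local_series_R_sums:
  assumes d: "d \<in> {1,2,3,4,7}" and pR: "p \<in> R_set d"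
  shows "(\<lambda>j. local_coeff d p j / real p ^ j) sums euler_factor_R d p"
proof -
  have p2: "p \<ge> 2" using R_set_facts(3)[OF d pR] prime_ge_2_nat by blast
  define x where "x = 1 / real p ^ 2"
  have x: "norm x < 1" unfolding x_def using p2 by (simp add: power_le_one_iff)
  define c where "c = W_increment_numer d p 4"
  have "x ^ j = 1 / (real p ^ j * real p ^ j)" for j
    unfolding x_def by (simp add: power_one_over power_mult[symmetric] power2_eq_square[symmetric]
        mult.commute)
  then have term_eq: "local_coeff d p j / real p ^ j = W_increment_numer d p j * x ^ j" for j
    using W_increment_closed_form[OF d pR] pR unfolding local_coeff_def by simp
  have "(\<lambda>j. if j \<in> {0,1,2,3} then W_increment_numer d p j * x ^ j else c * x ^ j) sums
     (c * (1 / (1 - x)) + (\<Sum>j\<in>{0,1,2,3}. W_increment_numer d p j * x ^ j - c * x ^ j))"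
    by (rule sums_If_finite_set'[OF sums_mult[OF geometric_sums[OF x]]]) auto
  moreover have "(if j \<in> {0,1,2,3} then W_increment_numer d p j * x ^ j else c * x ^ j)
      = local_coeff d p j / real p ^ j" for j
    unfolding term_eq c_def by (auto simp: W_increment_numer_def)
  moreover have "c * (1 / (1 - x)) + (\<Sum>j\<in>{0,1,2,3}. W_increment_numer d p j * x ^ j - c * x ^ j)
      = euler_factor_R d p"
    using d pR unfolding c_def x_def
    by (elim admissible_d_cases)
      (auto simp: R_set_def W_increment_numer_def euler_factor_R_def field_simps)
  ultimately show ?thesis by simp
qed

lemma local_series_sums:
  assumes d: "d \<in> {1,2,3,4,7}" and p: "prime p"
  shows "(\<lambda>j. local_coeff d p j / real p ^ j) sums euler_factor d p"
proof (cases "p \<in> R_set d")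
  case True
  then show ?thesis using local_series_R_sums[OF d True] by (simp add: euler_factor_def)
next
  case notR: False
  show ?thesis
  proof (cases "p \<in> Q_set d")
    case True
    have p2: "p \<ge> 2" using p prime_ge_2_nat by blast
    then have x: "norm (1 / real p ^ 2) < 1" by (simp add: power_le_one_iff)
    have "local_coeff d p j / real p ^ j = (1 / real p ^ 2) ^ j" for j
      using notR True by (simp add: local_coeff_def power_one_over power_mult[symmetric]
          mult.commute power2_eq_square[symmetric])
    then show ?thesis
      using geometric_sums[OF x] notR True by (simp add: euler_factor_def)
  next
    case False
    have "(\<lambda>j. local_coeff d p j / real p ^ j) sums (\<Sum>j\<in>{0}. local_coeff d p j / real p ^ j)"
      by (rule sums_finite) (use notR False in \<open>auto simp: local_coeff_def\<close>)
    then show ?thesis using notR False by (simp add: euler_factor_def local_coeff_def)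
  qed
qed

text \<open>All local series are dominated by 10 * 2^-j.\<close>
lemma local_series_abs_summable:
  assumes d: "d \<in> {1,2,3,4,7}" and p: "prime p"
  shows "summable (\<lambda>j. norm (local_coeff d p j / real p ^ j))"
proof (rule summable_comparison_test'[OF summable_mult[OF summable_geometric[of "1/2::real"]]])
  have p2: "real p \<ge> 2" using p prime_ge_2_nat by (simp add: of_nat_le_iff[symmetric])
  fix j :: nat
  have "norm (norm (local_coeff d p j / real p ^ j)) = \<bar>local_coeff d p j\<bar> / real p ^ j"
    by (simp add: abs_divide)
  also have "\<dots> \<le> (10 / real p ^ j) / real p ^ j"
    using local_coeff_bound[OF d p, of j]
    by (intro divide_right_mono) (auto split: if_splits simp: divide_right_mono)
  also have "\<dots> \<le> 10 / real p ^ j / 1" using p2 by (intro divide_left_mono) auto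
  also have "\<dots> \<le> 10 / 2 ^ j" using p2 by (simp, intro divide_left_mono power_mono) auto
  finally show "norm (norm (local_coeff d p j / real p ^ j)) \<le> 10 * (1/2) ^ j"
    by (simp add: power_one_over)
qed auto

lemma local_series_has_sum:
  assumes d: "d \<in> {1,2,3,4,7}" and p: "prime p"
  shows "((\<lambda>j. local_coeff d p j / real p ^ j) has_sum euler_factor d p) UNIV"
  by (rule norm_summable_imp_has_sum[OF local_series_abs_summable[OF d p] local_series_sums[OF d p]])

lemma euler_product_finite:
  fixes \<gamma> :: "nat \<Rightarrow> nat \<Rightarrow> real"
  assumes fin: "finite P" and prime: "\<And>p. p \<in> P \<Longrightarrow> prime p" and \<gamma>0: "\<And>p. \<gamma> p 0 = 1"
    and summ: "\<And>p. p \<in> P \<Longrightarrow> (\<lambda>j. norm (\<gamma> p j / real p ^ j)) summable_on UNIV"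
  shows "infsum (\<lambda>k. multiplicative_fn \<gamma> k / real k) {k. k > 0 \<and> prime_factors k \<subseteq> P}
       = (\<Prod>p\<in>P. infsum (\<lambda>j. \<gamma> p j / real p ^ j) UNIV)"
proof -
  have bij: "bij_betw (prime_power_prod P) (PiE P (\<lambda>_. UNIV)) {k. k > 0 \<and> prime_factors k \<subseteq> P}"
    using prime_power_prod_bij[OF fin prime, of "\<lambda>_. UNIV"] by simp
  have "infsum (\<lambda>k. multiplicative_fn \<gamma> k / real k) {k. k > 0 \<and> prime_factors k \<subseteq> P}
      = infsum (\<lambda>e. multiplicative_fn \<gamma> (prime_power_prod P e) / real (prime_power_prod P e))
          (PiE P (\<lambda>_. UNIV))"
    by (rule infsum_reindex_bij_betw[OF bij, symmetric])
  also have "\<dots> = infsum (\<lambda>e. \<Prod>p\<in>P. \<gamma> p (e p) / real p ^ e p) (PiE P (\<lambda>_. UNIV))"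
    using multiplicative_fn_prime_power_prod[of P \<gamma>, OF fin prime \<gamma>0]
    by (intro infsum_cong) (simp add: prime_power_prod_def prod_dividef)
  also have "\<dots> = (\<Prod>p\<in>P. infsum (\<lambda>j. \<gamma> p j / real p ^ j) UNIV)"
    by (rule infsum_prod_PiE_abs[OF fin, of "\<lambda>p j. \<gamma> p j / real p ^ j" "\<lambda>_. UNIV"])
      (use summ in auto)
  finally show ?thesis .
qed

definition primes_below :: "nat \<Rightarrow> nat set" where
  "primes_below n = {p. prime p \<and> p < n}"

definition smooth_below :: "nat \<Rightarrow> nat set" where
  "smooth_below n = {k. k > 0 \<and> prime_factors k \<subseteq> primes_below n}"

lemma finite_primes_below: "finite (primes_below n)"
  unfolding primes_below_def by auto

lemma inverse_squares_has_sum_from: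
  "((\<lambda>k. 1 / real k ^ 2) has_sum (\<Sum>i. 1 / real (i + m) ^ 2)) {m..}"
proof -
  have "summable (\<lambda>i. 1 / real (i + m) ^ 2)"
    using summable_ignore_initial_segment[OF summable_inverse_squares] .
  then have "((\<lambda>i. 1 / real (i + m) ^ 2) has_sum (\<Sum>i. 1 / real (i + m) ^ 2)) UNIV"
    by (intro norm_summable_imp_has_sum) (auto simp: summable_sums)
  moreover have "bij_betw (\<lambda>i. i + m) UNIV {m..}"
    by (rule bij_betwI[where g="\<lambda>k. k - m"]) auto
  ultimately show ?thesis
    using has_sum_reindex_bij_betw[of "\<lambda>i. i + m" UNIV "{m..}" "\<lambda>k. 1 / real k ^ 2"] by simp
qed

text \<open>A positive integer that is not n-smooth has a prime factor >= n, so it is >= n.\<close>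
lemma not_smooth_below_ge:
  assumes "k \<notin> smooth_below n" "k \<noteq> 0"
  shows "k \<ge> n"
proof (rule ccontr)
  assume "\<not> k \<ge> n"
  have "q \<in> primes_below n" if q: "q \<in> prime_factors k" for q
  proof -
    have "prime q" "q dvd k" using q by (auto dest: in_prime_factors_imp_prime in_prime_factors_imp_dvd)
    then have "q \<le> k" using assms(2) by (auto intro: dvd_imp_le)
    then show ?thesis using \<open>prime q\<close> \<open>\<not> k \<ge> n\<close> by (auto simp: primes_below_def)
  qed
  then show False using assms by (auto simp: smooth_below_def)
qed

lemma summable_if_inverse_square_bound:
  fixes a :: "nat \<Rightarrow> real"
  assumes "\<And>k. \<bar>a k\<bar> \<le> B * (1 / real k ^ 2)"
  shows "summable (\<lambda>k. norm (a k))"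
  by (rule summable_comparison_test'[OF summable_mult[OF summable_inverse_squares, of B]])
    (use assms in auto)

text \<open>For |a k| <= B/k^2 the sum over the integers that are not n-smooth is O(B/n),
  since they are all >= n.\<close>
lemma not_smooth_sum_bound:
  fixes a :: "nat \<Rightarrow> real"
  assumes bound: "\<And>k. \<bar>a k\<bar> \<le> B * (1 / real k ^ 2)" and n: "n \<ge> 2"
  shows "\<bar>infsum a (UNIV - smooth_below n)\<bar> \<le> B / (real n - 1)"
proof -
  have abs_summ_on: "(\<lambda>k. norm (a k)) summable_on S" for S
    using summable_on_subset_banach[of "\<lambda>k. norm (a k)" UNIV S]
      summable_if_inverse_square_bound[OF bound]
    by (auto simp: summable_on_UNIV_nonneg_real_iff)
  have "\<bar>infsum a (UNIV - smooth_below n)\<bar> \<le> infsum (\<lambda>k. norm (a k)) (UNIV - smooth_below n)"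
    using norm_infsum_bound[of a "UNIV - smooth_below n"] abs_summ_on by simp
  also have "\<dots> \<le> infsum (\<lambda>k. B * (1 / real k ^ 2)) {n..}"
  proof (rule infsum_mono_neutral[OF abs_summ_on])
    show "(\<lambda>k. B * (1 / real k ^ 2)) summable_on {n..}"
      using inverse_squares_has_sum_from[of n] by (intro summable_on_cmult_right) (auto simp: has_sum_iff)
    show "0 \<le> B * (1 / real x ^ 2)" for x using bound[of x] by linarith
    show "norm (a x) \<le> 0" if "x \<in> (UNIV - smooth_below n) - {n..}" for x
      using that not_smooth_below_ge[of x n] bound[of 0] by (cases "x = 0") auto
  qed (use bound in auto)
  also have "\<dots> = B * infsum (\<lambda>k. 1 / real k ^ 2) {n..}" by (rule infsum_cmult_right')
  also have "infsum (\<lambda>k. 1 / real k ^ 2) {n..} = (\<Sum>i. 1 / real (i + Suc (n - 1)) ^ 2)"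
    using inverse_squares_has_sum_from[of n] n by (simp add: has_sum_iff)
  also have "B * (\<Sum>i. 1 / real (i + Suc (n - 1)) ^ 2) \<le> B * (1 / real (n - 1))"
    using bound[of 1] n by (intro mult_left_mono inverse_squares_tail) auto
  finally show ?thesis using n by (simp add: of_nat_diff)
qed

lemma smooth_sums_tendsto:
  fixes a :: "nat \<Rightarrow> real"
  assumes bound: "\<And>k. \<bar>a k\<bar> \<le> B * (1 / real k ^ 2)"
  shows "(\<lambda>n. infsum a (smooth_below n)) \<longlonglongrightarrow> (\<Sum>k. a k)"
proof -
  note abs_summ = summable_if_inverse_square_bound[OF bound]
  have has_sum: "(a has_sum (\<Sum>k. a k)) UNIV"
    by (rule norm_summable_imp_has_sum[OF abs_summ summable_sums[OF summable_norm_cancel[OF abs_summ]]])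
  have summ_on: "a summable_on S" for S
    using summable_on_subset_banach[of a UNIV S] has_sum by (auto simp: has_sum_iff)
  have "(\<lambda>n. infsum a (smooth_below n) - (\<Sum>k. a k)) \<longlonglongrightarrow> 0"
  proof (rule Lim_null_comparison)
    show "\<forall>\<^sub>F n in sequentially. norm (infsum a (smooth_below n) - (\<Sum>k. a k)) \<le> B / (real n - 1)"
      using eventually_ge_at_top[of 2]
    proof eventually_elim
      case (elim n)
      have "(\<Sum>k. a k) = infsum a (smooth_below n) + infsum a (UNIV - smooth_below n)"
        using has_sum infsum_Un_disjoint[OF summ_on summ_on, of "smooth_below n" "UNIV - smooth_below n"]
        by (simp add: has_sum_iff)
      then show ?case using not_smooth_sum_bound[OF bound elim] by simp
    qed
    show "(\<lambda>n. B / (real n - 1)) \<longlonglongrightarrow> 0" by real_asymp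
  qed
  then show ?thesis by (simp add: LIM_zero_iff)
qed

lemma euler_product_tendsto:
  assumes d: "d \<in> {1,2,3,4,7}"
  shows "(\<lambda>n. \<Prod>p\<in>primes_below n. euler_factor d p)
     \<longlonglongrightarrow> (\<Sum>k. multiplicative_fn (local_coeff d) k / real k)"
proof -
  let ?a = "\<lambda>k. multiplicative_fn (local_coeff d) k / real k"
  have euler: "infsum ?a (smooth_below n) = (\<Prod>p\<in>primes_below n. euler_factor d p)" for n
  proof -
    have prime: "\<And>p. p \<in> primes_below n \<Longrightarrow> prime p" by (simp add: primes_below_def)
    have "infsum ?a (smooth_below n)
        = (\<Prod>p\<in>primes_below n. infsum (\<lambda>j. local_coeff d p j / real p ^ j) UNIV)"
      unfolding smooth_below_def
    proof (rule euler_product_finite[of "primes_below n" "local_coeff d", OF finite_primes_below prime local_coeff_0])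
      show "(\<lambda>j. norm (local_coeff d p j / real p ^ j)) summable_on UNIV" if "p \<in> primes_below n" for p
        using local_series_abs_summable[OF d prime[OF that]]
        by (simp add: summable_on_UNIV_nonneg_real_iff)
    qed
    also have "\<dots> = (\<Prod>p\<in>primes_below n. euler_factor d p)"
      by (intro prod.cong refl infsumI local_series_has_sum[OF d prime])
    finally show ?thesis .
  qed
  have "(\<lambda>n. infsum ?a (smooth_below n)) \<longlonglongrightarrow> (\<Sum>k. ?a k)"
    by (rule smooth_sums_tendsto[of _ 100])
      (rule summable_over_k_if_bounded(1)[OF multiplicative_local_coeff_bound[OF d]])
  then show ?thesis unfolding euler .
qed

text \<open>The Euler product of A_d splits into the factors at R_d, the factor at 2 when 2 \<in> Q_d
  (only for d = 3), and the product over the odd primes of Q_d, which is g_d^2.\<close>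
definition R_euler_prod :: "nat \<Rightarrow> real" where
  "R_euler_prod d = (\<Prod>p\<in>R_set d. euler_factor_R d p)"

definition Q_two_factor :: "nat \<Rightarrow> real" where
  "Q_two_factor d = (if d = 3 then 4/3 else 1)"

definition odd_Q_prod :: "nat \<Rightarrow> nat \<Rightarrow> real" where
  "odd_Q_prod d n = (\<Prod>p\<in>primes_below n \<inter> {p. p \<in> Q_set d \<and> odd p}. 1 / (1 - 1 / real p ^ 2))"

lemma even_prime_eq_2: "prime (p::nat) \<Longrightarrow> even p \<Longrightarrow> p = 2"
  using prime_odd_nat[of p] prime_ge_2_nat[of p] by linarith

lemma R_euler_prod_Q_two_factor_nonzero:
  "d \<in> {1,2,3,4,7} \<Longrightarrow> R_euler_prod d * Q_two_factor d \<noteq> 0"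
  by (auto simp: R_euler_prod_def Q_two_factor_def R_set_def euler_factor_R_def)

lemma euler_product_split:
  assumes d: "d \<in> {1,2,3,4,7}" and n: "n > 7"
  shows "(\<Prod>p\<in>primes_below n. euler_factor d p) = R_euler_prod d * Q_two_factor d * odd_Q_prod d n"
proof -
  have R_sub: "R_set d \<subseteq> primes_below n" using d n by (auto simp: R_set_def primes_below_def)
  have "(\<Prod>p\<in>primes_below n. euler_factor d p)
      = (\<Prod>p\<in>R_set d. euler_factor d p) * (\<Prod>p\<in>primes_below n - R_set d. euler_factor d p)"
    using prod.subset_diff[OF R_sub finite_primes_below] by (simp add: mult.commute)
  also have "(\<Prod>p\<in>R_set d. euler_factor d p) = R_euler_prod d"
    unfolding R_euler_prod_def euler_factor_def by simp
  also have "(\<Prod>p\<in>primes_below n - R_set d. euler_factor d p)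
      = (\<Prod>p\<in>primes_below n \<inter> Q_set d. 1 / (1 - 1 / real p ^ 2))"
    using R_set_facts(4)[OF d]
    by (intro prod.mono_neutral_cong_right) (auto simp: euler_factor_def finite_primes_below)
  also have "(\<Prod>p\<in>primes_below n \<inter> Q_set d. 1 / (1 - 1 / real p ^ 2))
      = Q_two_factor d * odd_Q_prod d n"
  proof (cases "d = 3")
    case True
    then have eq: "primes_below n \<inter> Q_set d
        = insert 2 (primes_below n \<inter> {p. p \<in> Q_set d \<and> odd p})"
      using n by (auto simp: primes_below_def Q_set_def dest: even_prime_eq_2)
    show ?thesis
      unfolding odd_Q_prod_def Q_two_factor_def eq using True finite_primes_below
      by (subst prod.insert) auto
  next
    case False
    then have "2 \<notin> Q_set d" using d by (auto simp: Q_set_def)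
    then have "primes_below n \<inter> Q_set d = primes_below n \<inter> {p. p \<in> Q_set d \<and> odd p}"
      by (auto simp: primes_below_def dest: even_prime_eq_2)
    then show ?thesis unfolding odd_Q_prod_def Q_two_factor_def using False by simp
  qed
  finally show ?thesis by (simp add: mult_ac)
qed

lemma odd_Q_prod_ge_1: "odd_Q_prod d n \<ge> 1"
  unfolding odd_Q_prod_def
proof (rule prod_ge_1)
  fix p assume "p \<in> primes_below n \<inter> {p. p \<in> Q_set d \<and> odd p}"
  then have "p \<ge> 2" by (auto simp: primes_below_def prime_ge_2_nat)
  then have "1 / real p ^ 2 > 0" "1 / real p ^ 2 < 1" by (auto simp: power_le_one_iff)
  then show "1 \<le> 1 / (1 - 1 / real p ^ 2)" by (simp add: field_simps)
qed

lemma odd_Q_prod_tendsto: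
  assumes d: "d \<in> {1,2,3,4,7}"
  shows "odd_Q_prod d \<longlonglongrightarrow>
    (\<Sum>k. multiplicative_fn (local_coeff d) k / real k) / (R_euler_prod d * Q_two_factor d)"
proof -
  note nz = R_euler_prod_Q_two_factor_nonzero[OF d]
  have "(\<lambda>n. (\<Prod>p\<in>primes_below n. euler_factor d p) / (R_euler_prod d * Q_two_factor d))
     \<longlonglongrightarrow> (\<Sum>k. multiplicative_fn (local_coeff d) k / real k) / (R_euler_prod d * Q_two_factor d)"
    by (intro tendsto_divide euler_product_tendsto[OF d] tendsto_const nz)
  moreover have "\<forall>\<^sub>F n in sequentially.
      (\<Prod>p\<in>primes_below n. euler_factor d p) / (R_euler_prod d * Q_two_factor d) = odd_Q_prod d n"
    using eventually_gt_at_top[of 7] by eventually_elim (use euler_product_split[OF d] nz in simp)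
  ultimately show ?thesis by (rule Lim_transform_eventually)
qed

lemma real_sqrt_prod: "sqrt (prod f A) = (\<Prod>x\<in>A. sqrt (f x))"
  by (induction A rule: infinite_finite_induct) (simp_all add: real_sqrt_mult)

lemma g_const_partial_prod:
  "(\<Prod>i\<le>n. (if i \<in> Q_set d \<and> odd i then (1 - 1 / (real i)^2) powr (-1/2) else 1))
     = sqrt (odd_Q_prod d (Suc n))"
proof -
  have "(\<Prod>i\<le>n. (if i \<in> Q_set d \<and> odd i then (1 - 1 / (real i)^2) powr (-1/2) else 1))
      = (\<Prod>i\<in>{i\<in>{..n}. i \<in> Q_set d \<and> odd i}. (1 - 1 / (real i)^2) powr (-1/2))"
    by (rule prod.inter_filter[symmetric]) simp
  also have "{i\<in>{..n}. i \<in> Q_set d \<and> odd i} = primes_below (Suc n) \<inter> {p. p \<in> Q_set d \<and> odd p}"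
    by (auto simp: primes_below_def Q_set_def)
  also have "(\<Prod>i\<in>primes_below (Suc n) \<inter> {p. p \<in> Q_set d \<and> odd p}. (1 - 1 / (real i)^2) powr (-1/2))
      = (\<Prod>i\<in>primes_below (Suc n) \<inter> {p. p \<in> Q_set d \<and> odd p}. sqrt (1 / (1 - 1 / real i ^ 2)))"
  proof (rule prod.cong[OF refl])
    fix i assume "i \<in> primes_below (Suc n) \<inter> {p. p \<in> Q_set d \<and> odd p}"
    then have "i \<ge> 2" by (auto simp: primes_below_def prime_ge_2_nat)
    then have pos: "1 - 1 / (real i)^2 > 0" by (auto simp: power_le_one_iff)
    have "(1 - 1 / (real i)^2) powr (-1/2) = (1 - 1 / (real i)^2) powr (- (1/2))" by simp
    also have "\<dots> = 1 / sqrt (1 - 1 / (real i)^2)"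
      using pos by (simp add: powr_minus_divide powr_half_sqrt)
    also have "\<dots> = sqrt (1 / (1 - 1 / real i ^ 2))" by (simp add: real_sqrt_divide)
    finally show "(1 - 1 / (real i)^2) powr (-1/2) = sqrt (1 / (1 - 1 / real i ^ 2))" .
  qed
  also have "\<dots> = sqrt (odd_Q_prod d (Suc n))" unfolding odd_Q_prod_def real_sqrt_prod ..
  finally show ?thesis .
qed

lemma g_const_sq:
  assumes d: "d \<in> {1,2,3,4,7}"
  shows "g_const d ^ 2
       = (\<Sum>k. multiplicative_fn (local_coeff d) k / real k) / (R_euler_prod d * Q_two_factor d)"
proof -
  define L where
    "L = (\<Sum>k. multiplicative_fn (local_coeff d) k / real k) / (R_euler_prod d * Q_two_factor d)"
  have lim: "(\<lambda>n. odd_Q_prod d (Suc n)) \<longlonglongrightarrow> L"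
    unfolding L_def using odd_Q_prod_tendsto[OF d] by (rule LIMSEQ_Suc)
  have L: "L \<ge> 1" by (rule LIMSEQ_le_const[OF lim]) (use odd_Q_prod_ge_1 in auto)
  define f where "f i = (if i \<in> Q_set d \<and> odd i then (1 - 1 / (real i)^2) powr (-1/2) else 1)" for i
  have "raw_has_prod f 0 (sqrt L)"
    unfolding raw_has_prod_def
  proof
    show "(\<lambda>n. \<Prod>i\<le>n. f (i + 0)) \<longlonglongrightarrow> sqrt L"
      using tendsto_real_sqrt[OF lim] by (simp add: f_def g_const_partial_prod)
    show "sqrt L \<noteq> 0" using L by simp
  qed
  then have "prodinf f = sqrt L" by (intro has_prod_unique[symmetric]) (simp add: has_prod_def)
  then show ?thesis using L unfolding g_const_def f_def L_def by simp
qed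

lemma totient_values: "totient 2 = 1" "totient 4 = 2" "totient 6 = 2" "totient 8 = 4" "totient 14 = 6"
proof -
  show "totient 2 = 1" using totient_prime[of 2] by simp
  show "totient 4 = 2" using totient_prime_power_Suc[of 2 1] by simp
  show "totient 8 = 4" using totient_prime_power_Suc[of 2 2] by simp
  show "totient 6 = 2" using totient_mult_coprime[of 2 3] totient_prime[of 2] totient_prime[of 3] by simp
  show "totient 14 = 6" using totient_mult_coprime[of 2 7] totient_prime[of 2] totient_prime[of 7] by simp
qed

lemma explicit_constants_match:
  assumes d: "d \<in> {1,2,3,4,7}"
  shows "T_const d * R_euler_prod d * Q_two_factor d
       = delta_const d ^ 2 * (2 * real d * L1 d / (pi * real (totient (2 * d))))"
proof -
  have "totient (Suc (Suc 0)) = Suc 0" using totient_values(1) by (simp add: numeral_2_eq_2)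
  then show ?thesis
    using d
    by (elim admissible_d_cases)
      (simp_all add: T_const_def R_euler_prod_def Q_two_factor_def R_set_def W_local_def
        euler_factor_R_def c_const_def delta_const_def L1_def totient_values
        field_simps real_sqrt_mult[symmetric])
qed

lemma beta_const_sq:
  assumes d: "d \<in> {1,2,3,4,7}"
  shows "beta_const d ^ 2 = T_const d * (\<Sum>k. multiplicative_fn (local_coeff d) k / real k)"
proof -
  define K where "K = 2 * real d * L1 d / (pi * real (totient (2 * d)))"
  have K: "K \<ge> 0" unfolding K_def using d by (elim admissible_d_cases) (auto simp: L1_def)
  have "beta_const d ^ 2 = (delta_const d ^ 2 * K) * g_const d ^ 2"
    unfolding beta_const_def K_def[symmetric] using K by (simp add: power_mult_distrib mult_ac)
  also have "delta_const d ^ 2 * K = T_const d * R_euler_prod d * Q_two_factor d"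
    unfolding K_def by (rule explicit_constants_match[OF d, symmetric])
  also have "T_const d * R_euler_prod d * Q_two_factor d * g_const d ^ 2
      = T_const d * (\<Sum>k. multiplicative_fn (local_coeff d) k / real k)"
    unfolding g_const_sq[OF d] using R_euler_prod_Q_two_factor_nonzero[OF d] by simp
  finally show ?thesis .
qed

theorem theorem6p2:
  fixes d :: nat and \<epsilon> :: real
  assumes "d \<in> {1, 2, 3, 4, 7}" and "\<epsilon> > 0"
  shows "(\<forall>H::nat.
            (\<Sum>q\<in>{q \<in> {1..H} \<times> {1..H}. fst q \<noteq> snd q}.
               T_series d (nat \<bar>int (snd q) - int (fst q)\<bar>))
          = 2 * (\<Sum>h = 1..H - 1. real (H - h) * T_series d h))
      \<and> (\<lambda>H::nat. (\<Sum>q\<in>{q \<in> {1..H} \<times> {1..H}. fst q \<noteq> snd q}.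
               T_series d (nat \<bar>int (snd q) - int (fst q)\<bar>))
            - (beta_const d)^2 * (real H)^2)
          \<in> O(\<lambda>H. real H powr (1 + \<epsilon>))"
proof -
  note d = assms(1)
  define g where "g = multiplicative_fn (local_coeff d)"
  define F where "F H = 2 * (\<Sum>h = 1..H - 1. real (H - h) * (\<Sum>k | k dvd h. g k))" for H
  have T_weighted: "2 * (\<Sum>h = 1..H - 1. real (H - h) * T_series d h) = T_const d * F H" for H
  proof -
    have "(\<Sum>h = 1..H - 1. real (H - h) * T_series d h)
        = (\<Sum>h = 1..H - 1. T_const d * (real (H - h) * (\<Sum>k | k dvd h. g k)))"
      by (intro sum.cong refl) (auto simp: T_series_divisor_sum[OF d] g_def)
    then show ?thesis unfolding F_def by (simp add: sum_distrib_left[symmetric])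
  qed
  have "(\<lambda>H. F H - (\<Sum>k. g k / real k) * real H ^ 2) \<in> O(\<lambda>H. real H powr (1 + \<epsilon>))"
    unfolding F_def g_def
    by (rule weighted_divisor_sum_bigo[OF multiplicative_local_coeff_bound[OF d] assms(2)])
  then have "(\<lambda>H. T_const d * (F H - (\<Sum>k. g k / real k) * real H ^ 2))
      \<in> O(\<lambda>H. real H powr (1 + \<epsilon>))" by simp
  then show ?thesis
    unfolding sum_over_distinct_pairs T_weighted beta_const_sq[OF d] g_def[symmetric]
    by (simp add: algebra_simps)
qed

end
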